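(* Let $g$ be a constant indefinite pseudo-Riemann metric on $\mathbb R^4$ (i.e. of signature $(-+++)$, $(+---)$ or $(--++)$), let $C_1\in\mathbb R\setminus\{0\}$ and $C_2\in\mathbb R$, and let $\kappa=C_1\ast_g+C_2\operatorname{Id}\in\Omega^2_2(\mathbb R^4)$. Then $\kappa$ is not decomposable.
   Context: A tensor on $\mathbb R^4$ is constant if its components are constant in a fixed global coordinate system $\{x^i\}_{i=0}^3$. $\varepsilon_{ijkl}$ denotes the Levi-Civita permutation symbol. $\Omega^2_2(\mathbb R^4)$ is the space of tensor fields $\kappa=\frac18\kappa^{ij}_{rs}\,dx^r\wedge dx^s\otimes\partial_i\wedge\partial_j$ (components antisymmetric in $ij$ and $rs$), acting on 2-forms by $\kappa(\frac12F_{ij}dx^i\wedge dx^j)=\frac12G_{ij}dx^i\wedge dx^j$, $G_{ij}=\frac12\kappa^{ab}_{ij}F_{ab}$. $\operatorname{Id}^{ij}_{rs}=\delta^i_r\delta^j_s-\delta^i_s\delta^j_r$. Hodge star: $(\ast_g)^{ij}_{rs}=\sqrt{|\det g|}\,g^{ia}g^{jb}\varepsilon_{abrs}$ with $g^{ij}$ the inverse of $g_{ij}$. For a bivector $A=\frac12A^{ij}\partial_i\wedge\partial_j$ and 2-form $F$, $F(A)=\frac12F_{ij}A^{ij}$. A plane wave for $\kappa$ is a pair $F=\operatorname{Re}\{e^{i\Phi}X\}$, $G=\operatorname{Re}\{e^{i\Phi}Y\}$ with $\Phi:\mathbb R^4\to\mathbb R$, $d\Phi$ constant and nonzero, $X,Y$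 constant complex 2-forms not both zero, solving $dF=0$, $dG=0$, $G=\kappa(F)$. $\kappa$ (constant) is decomposable if there exist nonzero constant bivectors $A,B$ such that every plane wave $F,G$ of $\kappa$ satisfies $F(A)=0$ identically or $F(B)=0$ identically. *)

theory Defs
  imports "HOL-Analysis.Analysis"
begin

text \<open>Coordinates x^0..x^3 of R^4 are indexed by the finite type 4, with
  index numerals 0,1,2,3 :: 4. Points of R^4 are real^4.\<close>

definition levi_civita :: "4 \<Rightarrow> 4 \<Rightarrow> 4 \<Rightarrow> 4 \<Rightarrow> real" where
  "levi_civita a b c d =
     (let p = (\<lambda>i::4. if i = 0 then a else if i = 1 then b else if i = 2 then c else d)
      in if p permutes UNIV then of_int (sign p) else 0)"

definition indefinite_metric :: "real^4^4 \<Rightarrow> bool" where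
  "indefinite_metric g \<longleftrightarrow> transpose g = g \<and> det g \<noteq> 0 \<and>
     (\<exists>v. v \<bullet> (g *v v) > 0) \<and> (\<exists>w. w \<bullet> (g *v w) < 0)"

text \<open>Components kappa^{ij}_{rs} of the Hodge star, indexed as (i j r s).\<close>
definition hodge :: "real^4^4 \<Rightarrow> 4 \<Rightarrow> 4 \<Rightarrow> 4 \<Rightarrow> 4 \<Rightarrow> real" where
  "hodge g i j r s = sqrt \<bar>det g\<bar> *
     (\<Sum>a\<in>UNIV. \<Sum>b\<in>UNIV. matrix_inv g $ i $ a * matrix_inv g $ j $ b * levi_civita a b r s)"

definition Id22 :: "4 \<Rightarrow> 4 \<Rightarrow> 4 \<Rightarrow> 4 \<Rightarrow> real" where
  "Id22 i j r s = (if i = r then 1 else 0) * (if j = s then 1 else 0)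
                - (if i = s then 1 else 0) * (if j = r then 1 else 0)"

definition act :: "(4 \<Rightarrow> 4 \<Rightarrow> 4 \<Rightarrow> 4 \<Rightarrow> real) \<Rightarrow> (4 \<Rightarrow> 4 \<Rightarrow> real) \<Rightarrow> 4 \<Rightarrow> 4 \<Rightarrow> real" where
  "act \<kappa> F i j = (1/2) * (\<Sum>a\<in>UNIV. \<Sum>b\<in>UNIV. \<kappa> a b i j * F a b)"

definition pderiv4 :: "(real^4 \<Rightarrow> real) \<Rightarrow> 4 \<Rightarrow> real^4 \<Rightarrow> real" where
  "pderiv4 f i x = frechet_derivative f (at x) (axis i 1)"

definition closed2 :: "(real^4 \<Rightarrow> 4 \<Rightarrow> 4 \<Rightarrow> real) \<Rightarrow> bool" where
  "closed2 F \<longleftrightarrow> (\<forall>x i j. (\<lambda>y. F y i j) differentiable (at x)) \<and>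
     (\<forall>x i j k. pderiv4 (\<lambda>y. F y j k) i x + pderiv4 (\<lambda>y. F y k i) j x
               + pderiv4 (\<lambda>y. F y i j) k x = 0)"

definition antisym2 :: "(4 \<Rightarrow> 4 \<Rightarrow> 'a::ab_group_add) \<Rightarrow> bool" where
  "antisym2 X \<longleftrightarrow> (\<forall>i j. X i j = - X j i)"

definition plane_wave ::
  "(4 \<Rightarrow> 4 \<Rightarrow> 4 \<Rightarrow> 4 \<Rightarrow> real) \<Rightarrow> (real^4 \<Rightarrow> 4 \<Rightarrow> 4 \<Rightarrow> real) \<Rightarrow> (real^4 \<Rightarrow> 4 \<Rightarrow> 4 \<Rightarrow> real) \<Rightarrow> bool" where
  "plane_wave \<kappa> F G \<longleftrightarrow>
     (\<exists>(\<Phi>::real^4 \<Rightarrow> real) (\<xi>::real^4) (X::4 \<Rightarrow> 4 \<Rightarrow> complex) (Y::4 \<Rightarrow> 4 \<Rightarrow> complex).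
        \<xi> \<noteq> 0 \<and> (\<forall>x. (\<Phi> has_derivative (\<lambda>v. \<xi> \<bullet> v)) (at x)) \<and>
        antisym2 X \<and> antisym2 Y \<and> (X \<noteq> (\<lambda>i j. 0) \<or> Y \<noteq> (\<lambda>i j. 0)) \<and>
        (\<forall>x i j. F x i j = Re (exp (\<i> * complex_of_real (\<Phi> x)) * X i j)) \<and>
        (\<forall>x i j. G x i j = Re (exp (\<i> * complex_of_real (\<Phi> x)) * Y i j)) \<and>
        closed2 F \<and> closed2 G \<and> (\<forall>x. G x = act \<kappa> (F x)))"

definition pair2 :: "(4 \<Rightarrow> 4 \<Rightarrow> real) \<Rightarrow> (4 \<Rightarrow> 4 \<Rightarrow> real) \<Rightarrow> real" where
  "pair2 F A = (1/2) * (\<Sum>i\<in>UNIV. \<Sum>j\<in>UNIV. F i j * A i j)"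

definition decomposable :: "(4 \<Rightarrow> 4 \<Rightarrow> 4 \<Rightarrow> 4 \<Rightarrow> real) \<Rightarrow> bool" where
  "decomposable \<kappa> \<longleftrightarrow>
     (\<exists>A B. antisym2 A \<and> antisym2 B \<and> A \<noteq> (\<lambda>i j. 0) \<and> B \<noteq> (\<lambda>i j. 0) \<and>
        (\<forall>F G. plane_wave \<kappa> F G \<longrightarrow>
           (\<forall>x. pair2 (F x) A = 0) \<or> (\<forall>x. pair2 (F x) B = 0)))"

end

theory Submission
  imports Defs
begin

text \<open>
  Suppose \<open>\<kappa> = C1 \<ast>\<^sub>g + C2 Id\<close> were decomposable with bivectors \<open>A\<close>, \<open>B\<close>.
  For a covector \<open>\<xi>\<close> that is null for the inverse metric \<open>h = g\<inverse>\<close> and a covector \<open>a\<close>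
  that is \<open>h\<close>-orthogonal to \<open>\<xi>\<close>, the field \<open>F = cos (\<xi>\<cdot>x) (\<xi> \<and> a)\<close> is closed and so is
  \<open>\<kappa> F\<close>, because \<open>\<xi> \<and> \<ast>(\<xi> \<and> a) = 0\<close>; hence \<open>(F, \<kappa> F)\<close> is a plane wave.  It therefore
  suffices to find such \<open>\<xi>, a\<close> with \<open>A(\<xi>,a) \<noteq> 0\<close> and \<open>B(\<xi>,a) \<noteq> 0\<close> simultaneously.
  Since \<open>h\<close> is indefinite it has a null vector \<open>z0\<close>; the null cone is then swept out
  (rationally) by \<open>\<xi>(v) = h(v,v) z0 - 2 h(z0,v) v\<close>, and vectors orthogonal to \<open>\<xi>\<close> by
  \<open>a(z,w) = h(\<xi>,w) z - h(\<xi>,z) w\<close>.  The quantity \<open>A(\<xi>(v), a(v,z,w))\<close> is a polynomial in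
  \<open>(v,z,w)\<close> which vanishes identically only if \<open>A = 0\<close> (in dimension \<open>\<ge> 3\<close>); two nonzero
  polynomials have a common non-zero along a line, which gives the required \<open>\<xi>, a\<close>.
\<close>

section \<open>The Levi-Civita symbol\<close>

definition perm_sign :: "('a::finite \<Rightarrow> 'a) \<Rightarrow> real" where
  "perm_sign p = (if p permutes UNIV then of_int (sign p) else 0)"

definition index_map :: "4 \<Rightarrow> 4 \<Rightarrow> 4 \<Rightarrow> 4 \<Rightarrow> 4 \<Rightarrow> 4" where
  "index_map a b c d = (\<lambda>i. if i = 0 then a else if i = 1 then b else if i = 2 then c else d)"

lemma levi_civita_perm_sign: "levi_civita a b c d = perm_sign (index_map a b c d)"
  unfolding levi_civita_def perm_sign_def index_map_def Let_def by simp

lemma perm_sign_compose_transpose: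
  assumes "x \<noteq> y"
  shows "perm_sign (p \<circ> Transposition.transpose x y) = - perm_sign p"
proof -
  let ?t = "Transposition.transpose x y"
  have t: "?t permutes UNIV" by (rule permutes_swap_id) auto
  have "p = (p \<circ> ?t) \<circ> ?t" by (auto simp: fun_eq_iff)
  then have perm_iff: "(p \<circ> ?t) permutes UNIV \<longleftrightarrow> p permutes UNIV"
    using permutes_compose[OF t, of p] permutes_compose[OF t, of "p \<circ> ?t"] by metis
  show ?thesis
  proof (cases "p permutes UNIV")
    case True
    have "sign (p \<circ> ?t) = sign p * sign ?t"
      using True t by (simp add: sign_compose permutes_imp_permutation)
    then show ?thesis using True perm_iff assms unfolding perm_sign_def by (simp add: sign_swap_id)
  qed (use perm_iff in \<open>simp add: perm_sign_def\<close>)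
qed

lemma perm_sign_not_inj:
  assumes "x \<noteq> y" "p x = p y"
  shows "perm_sign p = 0"
  using assms permutes_inj[of p UNIV] unfolding perm_sign_def by (auto simp: inj_def)

lemma index4_cases: "(i::4) = 0 \<or> i = 1 \<or> i = 2 \<or> i = 3"
  using exhaust_4[of i] by auto

lemma index_map_transpose:
  "index_map b a c d = index_map a b c d \<circ> Transposition.transpose 0 1"
  "index_map c b a d = index_map a b c d \<circ> Transposition.transpose 0 2"
  "index_map d b c a = index_map a b c d \<circ> Transposition.transpose 0 3"
  "index_map a c b d = index_map a b c d \<circ> Transposition.transpose 1 2"
  "index_map a d c b = index_map a b c d \<circ> Transposition.transpose 1 3"
  "index_map a b d c = index_map a b c d \<circ> Transposition.transpose 2 3"
  by (rule ext, use index4_cases in \<open>auto simp: index_map_def Transposition.transpose_def\<close>)+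

lemma levi_civita_swap:
  "levi_civita b a c d = - levi_civita a b c d"
  "levi_civita c b a d = - levi_civita a b c d"
  "levi_civita d b c a = - levi_civita a b c d"
  "levi_civita a c b d = - levi_civita a b c d"
  "levi_civita a d c b = - levi_civita a b c d"
  "levi_civita a b d c = - levi_civita a b c d"
  unfolding levi_civita_perm_sign
  by (subst index_map_transpose, rule perm_sign_compose_transpose, simp)+

lemma levi_civita_repeat:
  "levi_civita a a c d = 0" "levi_civita a b a d = 0" "levi_civita a b c a = 0"
  "levi_civita a b b d = 0" "levi_civita a b c b = 0" "levi_civita a b c c = 0"
  unfolding levi_civita_perm_sign
  by (rule perm_sign_not_inj[of 0 1] perm_sign_not_inj[of 0 2] perm_sign_not_inj[of 0 3]
      perm_sign_not_inj[of 1 2] perm_sign_not_inj[of 1 3] perm_sign_not_inj[of 2 3],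
      simp, simp add: index_map_def)+

lemma no_five_distinct_indices: "\<not> distinct [i, c, d, j, k :: 4]"
proof
  assume "distinct [i, c, d, j, k :: 4]"
  then have "card {i, c, d, j, k} = 5" by simp
  moreover have "card {i, c, d, j, k} \<le> CARD(4)" by (rule card_mono) auto
  ultimately show False by simp
qed

text \<open>Exchange identity: antisymmetrising over five indices gives zero in dimension four.
  This is the source of \<open>\<xi> \<and> \<ast>(\<xi> \<and> a) = 0\<close> for suitable \<open>\<xi>, a\<close>.\<close>
lemma levi_civita_exchange:
  fixes x :: "4 \<Rightarrow> real"
  shows "x i * levi_civita c d j k = x c * levi_civita i d j k + x d * levi_civita c i j k
     + x j * levi_civita c d i k + x k * levi_civita c d j i"
proof -
  have "i = c \<or> i = d \<or> i = j \<or> i = k \<or> c = d \<or> c = j \<or> c = k \<or> d = j \<or> d = k \<or> j = k"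
    using no_five_distinct_indices[of i c d j k] by auto
  then show ?thesis
  proof (elim disjE)
    assume "c = d" then show ?thesis using levi_civita_swap(1)[of i c j k] by (simp add: levi_civita_repeat)
  next
    assume "c = j" then show ?thesis using levi_civita_swap(2)[of i d c k] by (simp add: levi_civita_repeat)
  next
    assume "c = k" then show ?thesis using levi_civita_swap(3)[of i d j c] by (simp add: levi_civita_repeat)
  next
    assume "d = j" then show ?thesis using levi_civita_swap(4)[of c i d k] by (simp add: levi_civita_repeat)
  next
    assume "d = k" then show ?thesis using levi_civita_swap(5)[of c i j d] by (simp add: levi_civita_repeat)
  next
    assume "j = k" then show ?thesis using levi_civita_swap(6)[of c d i j] by (simp add: levi_civita_repeat)
  qed (simp_all add: levi_civita_repeat)
qed

text \<open>The exchange identity in the cyclic form needed for the exterior derivative.\<close>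
lemma levi_civita_cyclic_exchange:
  fixes x :: "4 \<Rightarrow> real"
  shows "x i * levi_civita c d j k + x j * levi_civita c d k i + x k * levi_civita c d i j
     = x c * levi_civita i d j k + x d * levi_civita c i j k"
  using levi_civita_exchange[of x i c d j k] levi_civita_swap(6)[of c d i k]
    levi_civita_swap(6)[of c d i j] by simp

section \<open>Bilinear forms, skew forms and null vectors\<close>

definition bform :: "real^'n^'n \<Rightarrow> real^'n \<Rightarrow> real^'n \<Rightarrow> real" where
  "bform M x y = x \<bullet> (M *v y)"

lemma bform_linear:
  "bform M (x + y) z = bform M x z + bform M y z"
  "bform M x (y + z) = bform M x y + bform M x z"
  "bform M (x - y) z = bform M x z - bform M y z"
  "bform M x (y - z) = bform M x y - bform M x z"
  "bform M (c *\<^sub>R x) z = c * bform M x z"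
  "bform M x (c *\<^sub>R z) = c * bform M x z"
  "bform M (- x) z = - bform M x z"
  "bform M x (- z) = - bform M x z"
  "bform M 0 z = 0" "bform M x 0 = 0"
  unfolding bform_def
  by (simp_all add: inner_add_left inner_diff_left matrix_vector_right_distrib vec.neg
      matrix_vector_mult_diff_distrib matrix_vector_mult_scaleR inner_add_right inner_diff_right)

lemma bform_transpose: "bform (transpose M) x y = bform M y x"
  unfolding bform_def transpose_matrix_vector by (metis dot_lmul_matrix inner_commute)

lemma bform_sym: "transpose M = M \<Longrightarrow> bform M x y = bform M y x"
  by (metis bform_transpose)

lemma bform_skew:
  assumes "transpose M = - M"
  shows "bform M x y = - bform M y x"
proof -
  have "bform M x y = bform (- M) y x" using bform_transpose[of M y x] assms by simp
  also have "\<dots> = - bform M y x"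
    unfolding bform_def by (simp add: matrix_vector_mult_def inner_vec_def sum_negf)
  finally show ?thesis .
qed

lemma bform_axis: "bform M (axis i 1) (axis j 1) = M $ i $ j"
  unfolding bform_def by (simp add: inner_axis' matrix_vector_mult_basis column_def)

lemma nonzero_vec_component: "(v::real^'n) \<noteq> 0 \<Longrightarrow> \<exists>i. v $ i \<noteq> 0"
  by (metis vec_eq_iff zero_index)

lemma annihilator_proportional:
  fixes \<phi> \<eta> :: "real^'n"
  assumes "\<eta> $ i \<noteq> 0" "\<And>x. \<eta> \<bullet> x = 0 \<Longrightarrow> \<phi> \<bullet> x = 0"
  shows "\<phi> = (\<phi> $ i / \<eta> $ i) *\<^sub>R \<eta>"
  unfolding vec_eq_iff
proof
  fix j
  have "\<eta> \<bullet> (\<eta> $ i *\<^sub>R axis j 1 - \<eta> $ j *\<^sub>R axis i 1) = 0"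
    by (simp add: inner_diff_right inner_axis mult.commute)
  then have "\<phi> \<bullet> (\<eta> $ i *\<^sub>R axis j 1 - \<eta> $ j *\<^sub>R axis i 1) = 0" by (rule assms(2))
  then have "\<eta> $ i * \<phi> $ j = \<eta> $ j * \<phi> $ i" by (simp add: inner_diff_right inner_axis mult.commute)
  then show "\<phi> $ j = ((\<phi> $ i / \<eta> $ i) *\<^sub>R \<eta>) $ j" using assms(1) by (simp add: field_simps)
qed

text \<open>An indefinite symmetric form has a nonzero null vector on the segment joining
  a positive and a negative vector.\<close>
lemma indefinite_form_null_vector:
  fixes h :: "real^'n^'n"
  assumes sym: "transpose h = h" and p: "bform h p p > 0" and n: "bform h n n < 0"
  shows "\<exists>z. z \<noteq> 0 \<and> bform h z z = 0"
proof -
  define P b N where "P = bform h p p" and "b = bform h p n" and "N = bform h n n"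
  define s where "s = sqrt (b\<^sup>2 - P * N)"
  define t where "t = (s - b) / P"
  have P0: "P > 0" and N0: "N < 0" using p n by (simp_all add: P_def N_def)
  then have "b\<^sup>2 - P * N \<ge> 0" by (smt (verit) mult_pos_neg zero_le_power2)
  then have s2: "s\<^sup>2 = b\<^sup>2 - P * N" unfolding s_def by simp
  have Pt: "P * t = s - b" unfolding t_def using P0 by simp
  have root: "(P * t)\<^sup>2 + 2 * b * (P * t) + P * N = 0"
    unfolding Pt using s2 by (simp add: power2_eq_square algebra_simps)
  have quad: "bform h (t *\<^sub>R p + n) (t *\<^sub>R p + n) = t * t * P + 2 * t * b + N"
    using bform_sym[OF sym, of n p] unfolding P_def b_def N_def by (simp add: bform_linear algebra_simps)
  have "P * (t * t * P + 2 * t * b + N) = (P * t)\<^sup>2 + 2 * b * (P * t) + P * N"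
    by (simp add: algebra_simps power2_eq_square)
  with root P0 have null: "bform h (t *\<^sub>R p + n) (t *\<^sub>R p + n) = 0" by (simp add: quad)
  have "t *\<^sub>R p + n \<noteq> 0"
  proof
    assume "t *\<^sub>R p + n = 0"
    then have "n = (- t) *\<^sub>R p" by (simp add: eq_neg_iff_add_eq_0 add.commute)
    then have "N = t * t * P" unfolding N_def P_def by (simp add: bform_linear)
    then show False using N0 P0 by (smt (verit) mult_nonneg_nonneg zero_le_square)
  qed
  with null show ?thesis by blast
qed

lemma two_other_indices:
  assumes "CARD('n::finite) \<ge> 3"
  shows "\<exists>j k :: 'n. j \<noteq> i \<and> k \<noteq> i \<and> j \<noteq> k"
proof -
  have "card (UNIV - {i}) \<ge> 2" using assms by simp
  then obtain S where "S \<subseteq> UNIV - {i}" "card S = 2" by (meson obtain_subset_with_card_n)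
  then show ?thesis by (auto simp: card_2_iff)
qed

text \<open>For a nondegenerate form in dimension \<open>\<ge> 3\<close>, the orthogonal complement of a nonzero
  null vector is not totally null (in dimension 2 it would be the null line itself).\<close>
lemma null_vector_orthogonal_nonnull:
  fixes h :: "real^'n^'n" and z0 :: "real^'n"
  assumes dim: "CARD('n) \<ge> 3" and sym: "transpose h = h" and nd: "\<And>y. h *v y = 0 \<Longrightarrow> y = 0"
    and z0: "z0 \<noteq> 0" "bform h z0 z0 = 0"
  shows "\<exists>y. bform h z0 y = 0 \<and> bform h y y \<noteq> 0"
proof (rule ccontr)
  assume "\<not> ?thesis"
  then have totally_null: "\<And>y. bform h z0 y = 0 \<Longrightarrow> bform h y y = 0" by blast
  define \<eta> where "\<eta> = h *v z0"
  have Bx: "bform h z0 x = \<eta> \<bullet> x" for x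
    using bform_sym[OF sym, of z0 x] unfolding bform_def \<eta>_def by (simp add: inner_commute)
  have "\<eta> \<noteq> 0" using nd z0(1) unfolding \<eta>_def by blast
  then obtain i where i: "\<eta> $ i \<noteq> 0" using nonzero_vec_component by blast
  have polar: "bform h y y' = 0" if "bform h z0 y = 0" "bform h z0 y' = 0" for y y'
  proof -
    have "bform h z0 (y + y') = 0" using that by (simp add: bform_linear)
    then have "bform h (y + y') (y + y') = 0" by (rule totally_null)
    moreover have "bform h (y + y') (y + y') = 2 * bform h y y'"
      using totally_null[OF that(1)] totally_null[OF that(2)] bform_sym[OF sym, of y' y]
      by (simp add: bform_linear)
    ultimately show ?thesis by simp
  qed
  have on_line: "\<exists>l. y = l *\<^sub>R z0" if "bform h z0 y = 0" for y
  proof -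
    have "(h *v y) \<bullet> x = 0" if "\<eta> \<bullet> x = 0" for x
      using polar[of x y] that \<open>bform h z0 y = 0\<close> Bx unfolding bform_def by (simp add: inner_commute)
    then have "h *v y = ((h *v y) $ i / \<eta> $ i) *\<^sub>R \<eta>" using annihilator_proportional[OF i] by blast
    then have "h *v (y - ((h *v y) $ i / \<eta> $ i) *\<^sub>R z0) = 0"
      unfolding \<eta>_def by (simp add: matrix_vector_mult_diff_distrib matrix_vector_mult_scaleR)
    then show ?thesis using nd by (metis eq_iff_diff_eq_0)
  qed
  obtain j k where jk: "j \<noteq> i" "k \<noteq> i" "j \<noteq> k" using two_other_indices[OF dim] by blast
  define yj where "yj = \<eta> $ i *\<^sub>R axis j 1 - \<eta> $ j *\<^sub>R axis i (1::real)"
  define yk where "yk = \<eta> $ i *\<^sub>R axis k 1 - \<eta> $ k *\<^sub>R axis i (1::real)"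
  have "bform h z0 yj = 0" "bform h z0 yk = 0"
    unfolding Bx yj_def yk_def by (simp_all add: inner_diff_right inner_axis mult.commute)
  then obtain lj lk where lj: "yj = lj *\<^sub>R z0" and lk: "yk = lk *\<^sub>R z0" using on_line by meson
  have "lj * z0 $ j = \<eta> $ i" "lj * z0 $ k = 0" "lk * z0 $ k = \<eta> $ i"
    using arg_cong[OF lj, of "\<lambda>v. v $ j"] arg_cong[OF lj, of "\<lambda>v. v $ k"]
      arg_cong[OF lk, of "\<lambda>v. v $ k"] jk unfolding yj_def yk_def by (simp_all add: axis_def)
  then show False using i by auto
qed

section \<open>The inverse of an indefinite metric\<close>

lemma matrix_inv_invertible:
  assumes "invertible (A :: real^'n^'n)"
  shows "A ** matrix_inv A = mat 1" and "matrix_inv A ** A = mat 1"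
proof -
  have "\<exists>A'. A ** A' = mat 1 \<and> A' ** A = mat 1" using assms unfolding invertible_def .
  then have "A ** matrix_inv A = mat 1 \<and> matrix_inv A ** A = mat 1"
    unfolding matrix_inv_def by (rule someI_ex)
  then show "A ** matrix_inv A = mat 1" and "matrix_inv A ** A = mat 1" by blast+
qed

lemma inverse_indefinite_metric:
  fixes g :: "real^4^4"
  assumes "indefinite_metric g"
  defines "h \<equiv> matrix_inv g"
  shows "transpose h = h" and "\<And>y. h *v y = 0 \<Longrightarrow> y = 0"
    and "\<exists>z0. z0 \<noteq> 0 \<and> bform h z0 z0 = 0"
proof -
  have gsym: "transpose g = g" and "det g \<noteq> 0"
    and pos: "\<exists>v. v \<bullet> (g *v v) > 0" and neg: "\<exists>w. w \<bullet> (g *v w) < 0"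
    using assms(1) unfolding indefinite_metric_def by auto
  then have "invertible g" using invertible_det_nz by blast
  then have inv: "g ** h = mat 1" "h ** g = mat 1"
    unfolding h_def by (simp_all add: matrix_inv_invertible)
  have "transpose h ** g = transpose (g ** h)" using gsym by (simp add: matrix_transpose_mul)
  then have left_inv: "transpose h ** g = mat 1" using inv(1) by (simp add: transpose_mat)
  have "transpose h = transpose h ** (g ** h)" using inv(1) by simp
  also have "\<dots> = (transpose h ** g) ** h" by (simp add: matrix_mul_assoc)
  finally show sym: "transpose h = h" using left_inv by simp
  show "y = 0" if "h *v y = 0" for y
  proof -
    have "y = (g ** h) *v y" using inv(1) by simp
    also have "\<dots> = g *v (h *v y)" by (simp add: matrix_vector_mul_assoc)
    finally show ?thesis using that by simp
  qed
  have transfer: "bform h (g *v v) (g *v v) = v \<bullet> (g *v v)" for v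
    unfolding bform_def using inv(2) by (simp add: matrix_vector_mul_assoc inner_commute)
  obtain p n where "bform h (g *v p) (g *v p) > 0" "bform h (g *v n) (g *v n) < 0"
    using pos neg by (auto simp: transfer)
  then show "\<exists>z0. z0 \<noteq> 0 \<and> bform h z0 z0 = 0" by (rule indefinite_form_null_vector[OF sym])
qed

section \<open>Parametrising null vectors and their orthogonal complements\<close>

text \<open>Given a null vector \<open>z0\<close>, every \<open>v\<close> produces the null vector
  \<open>h(v,v) z0 - 2 h(z0,v) v\<close> (a rescaled reflection of \<open>z0\<close> along \<open>v\<close>) \<dots>\<close>
definition null_param :: "real^'n^'n \<Rightarrow> real^'n \<Rightarrow> real^'n \<Rightarrow> real^'n" where
  "null_param h z0 v = bform h v v *\<^sub>R z0 - (2 * bform h z0 v) *\<^sub>R v"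

definition orth_param :: "real^'n^'n \<Rightarrow> real^'n \<Rightarrow> real^'n \<Rightarrow> real^'n \<Rightarrow> real^'n" where
  "orth_param h \<xi> z w = bform h \<xi> w *\<^sub>R z - bform h \<xi> z *\<^sub>R w"

definition probe ::
  "real^'n^'n \<Rightarrow> real^'n \<Rightarrow> real^'n^'n \<Rightarrow> real^'n \<Rightarrow> real^'n \<Rightarrow> real^'n \<Rightarrow> real" where
  "probe h z0 M v z w = bform M (null_param h z0 v) (orth_param h (null_param h z0 v) z w)"

lemma null_param_null:
  assumes "transpose h = h" "bform h z0 z0 = 0"
  shows "bform h (null_param h z0 v) (null_param h z0 v) = 0"
  unfolding null_param_def using assms bform_sym[OF assms(1), of v z0]
  by (simp add: bform_linear algebra_simps)

lemma orth_param_orthogonal: "bform h \<xi> (orth_param h \<xi> z w) = 0"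
  unfolding orth_param_def by (simp add: bform_linear)

text \<open>First \<open>M(z0, \<cdot>)\<close> is shown to be proportional to \<open>h(z0, \<cdot>)\<close>, then
  the constant of proportionality is shown to be zero, and finally \<open>M\<close> itself.  The
  dimension bound enters through \<open>null_vector_orthogonal_nonnull\<close>.\<close>
lemma probe_vanishing_imp_zero:
  fixes h M :: "real^'n^'n" and z0 :: "real^'n"
  assumes dim: "CARD('n) \<ge> 3" and sym: "transpose h = h" and nd: "\<And>y. h *v y = 0 \<Longrightarrow> y = 0"
    and z0: "z0 \<noteq> 0" "bform h z0 z0 = 0" and skew: "transpose M = - M"
    and vanish: "\<And>v z w. probe h z0 M v z w = 0"
  shows "M = 0"
proof -
  define m where "m = bform M"
  have m_skew: "m x y = - m y x" for x y unfolding m_def using bform_skew[OF skew] by blast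
  have hs: "bform h x y = bform h y x" for x y using bform_sym[OF sym] by blast
  have "h *v z0 \<noteq> 0" using nd z0(1) by blast
  then obtain i0 where i0: "(h *v z0) $ i0 \<noteq> 0" using nonzero_vec_component by blast
  define w0 where "w0 = (1 / (h *v z0) $ i0) *\<^sub>R axis i0 (1::real)"
  have hw0: "bform h z0 w0 = 1"
    using hs[of z0 w0] i0 unfolding bform_def w0_def by (simp add: inner_axis')
  obtain y where y: "bform h z0 y = 0" "bform h y y \<noteq> 0"
    using null_vector_orthogonal_nonnull[OF dim sym nd z0] by blast
  define c where "c = m z0 w0"
  have proportional: "m z0 z = c * bform h z0 z" for z
  proof -
    have "probe h z0 M y z w0 = (bform h y y)\<^sup>2 * (m z0 z - bform h z0 z * c)"
      unfolding probe_def orth_param_def null_param_def c_def m_def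
      using y(1) hw0 by (simp add: bform_linear algebra_simps power2_eq_square)
    then show ?thesis using vanish y(2) by (simp add: algebra_simps)
  qed
  have off_cone: "bform h z0 v * m v z = c * (bform h v v * bform h z0 z - bform h z0 v * bform h v z)"
    if hv: "bform h z0 v \<noteq> 0" for v z
  proof -
    have "m v z0 = - (c * bform h z0 v)" using m_skew[of v z0] proportional[of v] by simp
    then have "probe h z0 M v z z0 = 4 * (bform h z0 v)\<^sup>2 *
        (bform h z0 v * m v z - c * (bform h v v * bform h z0 z - bform h z0 v * bform h v z))"
      unfolding probe_def orth_param_def null_param_def m_def[symmetric]
      using z0(2) hs[of v z0] proportional[of z] m_skew[of z0 z0]
      by (simp add: bform_linear algebra_simps power2_eq_square m_def)
    then show ?thesis using vanish hv by simp
  qed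
  have c0: "c = 0"
  proof -
    define v1 where "v1 = y + w0"
    have hv1: "bform h z0 v1 = 1" unfolding v1_def using y(1) hw0 by (simp add: bform_linear)
    have "0 = m v1 w0 + m w0 v1" using m_skew[of v1 w0] by simp
    also have "\<dots> = c * (bform h v1 v1 - bform h v1 w0 + bform h w0 w0 - bform h w0 v1)"
      using off_cone[of v1 w0] off_cone[of w0 v1] hv1 hw0 by (simp add: algebra_simps)
    also have "bform h v1 v1 - bform h v1 w0 + bform h w0 w0 - bform h w0 v1 = bform h y y"
      unfolding v1_def using hs[of y w0] by (simp add: bform_linear)
    finally show ?thesis using y(2) by simp
  qed
  have "m v z = 0" for v z
  proof -
    define v' where "v' = v + (1 - bform h z0 v) *\<^sub>R w0"
    have "bform h z0 v' = 1" unfolding v'_def using hw0 by (simp add: bform_linear)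
    then have "m v' z = 0" "m w0 z = 0" using off_cone[of v' z] off_cone[of w0 z] hw0 c0 by simp_all
    moreover have "m v' z = m v z + (1 - bform h z0 v) * m w0 z"
      unfolding v'_def m_def by (simp add: bform_linear)
    ultimately show ?thesis by simp
  qed
  then show ?thesis unfolding m_def by (metis bform_axis vec_eq_iff zero_index)
qed

section \<open>A common non-zero of two probes\<close>

lemma real_polynomial_function_inner:
  fixes f g :: "real \<Rightarrow> 'a::euclidean_space"
  assumes "polynomial_function f" "polynomial_function g"
  shows "real_polynomial_function (\<lambda>t. f t \<bullet> g t)"
proof -
  have "real_polynomial_function (\<lambda>t. \<Sum>b\<in>Basis. (f t \<bullet> b) * (g t \<bullet> b))"
  proof (intro real_polynomial_function_sum real_polynomial_function.intros(4))
    fix b :: 'a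
    show "real_polynomial_function (\<lambda>t. f t \<bullet> b)" "real_polynomial_function (\<lambda>t. g t \<bullet> b)"
      using assms polynomial_function_inner unfolding real_polynomial_function_eq by blast+
  qed simp
  moreover have "(\<lambda>t. f t \<bullet> g t) = (\<lambda>t. \<Sum>b\<in>Basis. (f t \<bullet> b) * (g t \<bullet> b))"
    by (rule ext, rule euclidean_inner)
  ultimately show ?thesis by simp
qed

lemma polynomial_function_bform:
  fixes f g :: "real \<Rightarrow> real^'n"
  assumes "polynomial_function f" "polynomial_function g"
  shows "polynomial_function (\<lambda>t. bform M (f t) (g t))"
proof -
  have "polynomial_function (\<lambda>t. M *v g t)"
    using polynomial_function_compose[OF assms(2)
        polynomial_function_bounded_linear[OF matrix_vector_mul_bounded_linear]]
    by (simp add: o_def)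
  then show ?thesis
    unfolding bform_def real_polynomial_function_eq[symmetric] using assms(1)
    by (rule real_polynomial_function_inner[rotated])
qed

lemma polynomial_function_probe:
  fixes v z w :: "real \<Rightarrow> real^'n"
  assumes "polynomial_function v" "polynomial_function z" "polynomial_function w"
  shows "polynomial_function (\<lambda>t. probe h z0 M (v t) (z t) (w t))"
proof -
  have two_h: "polynomial_function (\<lambda>t. 2 * bform h z0 (v t))"
    using polynomial_function_bform[OF polynomial_function_const assms(1)]
    unfolding real_polynomial_function_eq[symmetric]
    by (rule real_polynomial_function.intros(4)[OF real_polynomial_function.intros(2)])
  have \<xi>: "polynomial_function (\<lambda>t. null_param h z0 (v t))"
    unfolding null_param_def
    by (rule polynomial_function_diff polynomial_function_mult polynomial_function_const
        polynomial_function_bform two_h assms(1))+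
  have "polynomial_function (\<lambda>t. orth_param h (null_param h z0 (v t)) (z t) (w t))"
    unfolding orth_param_def
    by (rule polynomial_function_diff polynomial_function_mult polynomial_function_bform \<xi> assms)+
  then show ?thesis unfolding probe_def using \<xi> by (rule polynomial_function_bform[rotated])
qed

lemma real_polynomial_function_finite_zeros:
  fixes f :: "real \<Rightarrow> real"
  assumes "real_polynomial_function f" "f a \<noteq> 0"
  shows "finite {t. f t = 0}"
proof -
  obtain c n where f: "f = (\<lambda>x. \<Sum>i\<le>n. c i * x^i)"
    using assms(1) real_polynomial_function_iff_sum by blast
  have "\<exists>k\<le>n. c k \<noteq> 0" using assms(2) polyfun_eq_0[of c n] f by auto
  then show ?thesis unfolding f by (simp add: polyfun_finite_roots)
qed

lemma real_polynomial_functions_common_nonzero: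
  fixes f g :: "real \<Rightarrow> real"
  assumes "real_polynomial_function f" "real_polynomial_function g" "f a \<noteq> 0" "g b \<noteq> 0"
  shows "\<exists>t. f t \<noteq> 0 \<and> g t \<noteq> 0"
proof -
  have "finite ({t. f t = 0} \<union> {t. g t = 0})"
    using assms real_polynomial_function_finite_zeros by blast
  then obtain t where "t \<notin> {t. f t = 0} \<union> {t. g t = 0}"
    using ex_new_if_finite[OF infinite_UNIV_char_0] by blast
  then show ?thesis by blast
qed

text \<open>Two nonzero skew forms are detected by one and the same probe: interpolate linearly
  between parameters detecting each of them.\<close>
lemma probe_simultaneously_nonzero:
  fixes h M N :: "real^'n^'n" and z0 :: "real^'n"
  assumes dim: "CARD('n) \<ge> 3" and sym: "transpose h = h" and nd: "\<And>y. h *v y = 0 \<Longrightarrow> y = 0"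
    and z0: "z0 \<noteq> 0" "bform h z0 z0 = 0"
    and skew: "transpose M = - M" "transpose N = - N" and nonzero: "M \<noteq> 0" "N \<noteq> 0"
  shows "\<exists>v z w. probe h z0 M v z w \<noteq> 0 \<and> probe h z0 N v z w \<noteq> 0"
proof -
  obtain v1 z1 w1 where 1: "probe h z0 M v1 z1 w1 \<noteq> 0"
    using probe_vanishing_imp_zero[OF dim sym nd z0 skew(1)] nonzero(1) by blast
  obtain v2 z2 w2 where 2: "probe h z0 N v2 z2 w2 \<noteq> 0"
    using probe_vanishing_imp_zero[OF dim sym nd z0 skew(2)] nonzero(2) by blast
  define line :: "real^'n \<Rightarrow> real^'n \<Rightarrow> real \<Rightarrow> real^'n" where "line p q t = p + t *\<^sub>R (q - p)" for p q t
  have lines: "polynomial_function (line p q)" for p q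
    unfolding line_def
    by (rule polynomial_function_add polynomial_function_mult polynomial_function_const
        polynomial_function_id)+
  have "\<exists>t. probe h z0 M (line v1 v2 t) (line z1 z2 t) (line w1 w2 t) \<noteq> 0 \<and>
            probe h z0 N (line v1 v2 t) (line z1 z2 t) (line w1 w2 t) \<noteq> 0"
  proof (rule real_polynomial_functions_common_nonzero[where a = 0 and b = 1])
    show "real_polynomial_function (\<lambda>t. probe h z0 M (line v1 v2 t) (line z1 z2 t) (line w1 w2 t))"
      "real_polynomial_function (\<lambda>t. probe h z0 N (line v1 v2 t) (line z1 z2 t) (line w1 w2 t))"
      unfolding real_polynomial_function_eq by (intro polynomial_function_probe lines)+
  qed (use 1 2 in \<open>simp_all add: line_def\<close>)
  then show ?thesis by blast
qed

section \<open>Tensor algebra of \<open>\<Omega>\<^sup>2\<^sub>2\<close>\<close>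

lemma act_linear_combination:
  "act (\<lambda>i j r s. C1 * K1 i j r s + C2 * K2 i j r s) X i j = C1 * act K1 X i j + C2 * act K2 X i j"
  unfolding act_def by (simp add: distrib_right sum.distrib sum_distrib_left algebra_simps)

lemma act_scale: "act \<kappa> (\<lambda>i j. c * X i j) = (\<lambda>i j. c * act \<kappa> X i j)"
  unfolding act_def fun_eq_iff by (simp add: sum_distrib_left mult.left_commute)

lemma act_antisym:
  assumes "\<And>a b i j. \<kappa> a b i j = - \<kappa> a b j i"
  shows "antisym2 (act \<kappa> X)"
  unfolding antisym2_def
proof (intro allI)
  fix i j
  have "(\<Sum>a\<in>UNIV. \<Sum>b\<in>UNIV. \<kappa> a b i j * X a b) = (\<Sum>a\<in>UNIV. \<Sum>b\<in>UNIV. - (\<kappa> a b j i * X a b))"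
    by (intro sum.cong refl) (metis assms mult_minus_left)
  then show "act \<kappa> X i j = - act \<kappa> X j i" unfolding act_def by (simp add: sum_negf)
qed

lemma hodge_antisym: "hodge g a b i j = - hodge g a b j i"
  unfolding hodge_def by (simp add: levi_civita_swap(6)[of _ _ j i] sum_negf)

lemma sum_delta2:
  fixes X :: "'a::finite \<Rightarrow> 'b::finite \<Rightarrow> real"
  shows "(\<Sum>a\<in>UNIV. \<Sum>b\<in>UNIV. (if a = p then 1 else 0) * (if b = q then 1 else 0) * X a b) = X p q"
proof -
  have "(\<Sum>b\<in>UNIV. (if a = p then 1 else 0) * (if b = q then 1 else 0) * X a b)
      = (if a = p then X a q else 0)" for a
  proof -
    have "(\<Sum>b\<in>UNIV. (if a = p then 1 else 0) * (if b = q then 1 else 0) * X a b)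
        = (\<Sum>b\<in>UNIV. if b = q then (if a = p then X a b else 0) else 0)"
      by (rule sum.cong) auto
    then show ?thesis by (simp add: sum.delta)
  qed
  then show ?thesis by simp
qed

lemma act_Id22:
  assumes "antisym2 X"
  shows "act Id22 X i j = X i j"
proof -
  have "act Id22 X i j = (X i j - X j i) / 2"
    unfolding act_def Id22_def
    by (simp add: left_diff_distrib sum_subtractf sum_delta2 del: mult_if_delta)
  then show ?thesis using assms[unfolded antisym2_def, rule_format, of j i] by simp
qed

definition wedge :: "real^4 \<Rightarrow> real^4 \<Rightarrow> 4 \<Rightarrow> 4 \<Rightarrow> real" where
  "wedge \<xi> a = (\<lambda>i j. \<xi> $ i * a $ j - \<xi> $ j * a $ i)"

definition mat_of :: "(4 \<Rightarrow> 4 \<Rightarrow> real) \<Rightarrow> real^4^4" where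
  "mat_of A = (\<chi> i j. A i j)"

lemma mat_of_skew:
  assumes "antisym2 A"
  shows "transpose (mat_of A) = - mat_of A"
  unfolding vec_eq_iff
proof (intro allI)
  fix i j
  show "transpose (mat_of A) $ i $ j = (- mat_of A) $ i $ j"
    using assms[unfolded antisym2_def, rule_format, of j i] by (simp add: mat_of_def transpose_def)
qed

lemma mat_of_nonzero: "A \<noteq> (\<lambda>i j. 0) \<Longrightarrow> mat_of A \<noteq> 0"
  unfolding mat_of_def by (auto simp: vec_eq_iff fun_eq_iff)

lemma pair2_wedge:
  assumes "antisym2 A"
  shows "pair2 (wedge \<xi> a) A = bform (mat_of A) \<xi> a"
proof -
  have "(\<Sum>i\<in>UNIV. \<Sum>j\<in>UNIV. \<xi>$j * a$i * A i j) = (\<Sum>i\<in>UNIV. \<Sum>j\<in>UNIV. \<xi>$i * a$j * A j i)"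
    by (rule sum.swap)
  also have "\<dots> = (\<Sum>i\<in>UNIV. \<Sum>j\<in>UNIV. - (\<xi>$i * a$j * A i j))"
    by (intro sum.cong refl) (metis assms antisym2_def mult_minus_right)
  also have "\<dots> = - (\<Sum>i\<in>UNIV. \<Sum>j\<in>UNIV. \<xi>$i * a$j * A i j)"
    by (simp add: sum_negf)
  finally have swapped: "(\<Sum>i\<in>UNIV. \<Sum>j\<in>UNIV. \<xi>$j * a$i * A i j)
      = - (\<Sum>i\<in>UNIV. \<Sum>j\<in>UNIV. \<xi>$i * a$j * A i j)" .
  have "pair2 (wedge \<xi> a) A
      = (1/2) * ((\<Sum>i\<in>UNIV. \<Sum>j\<in>UNIV. \<xi>$i * a$j * A i j) - (\<Sum>i\<in>UNIV. \<Sum>j\<in>UNIV. \<xi>$j * a$i * A i j))"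
    unfolding pair2_def wedge_def by (simp add: left_diff_distrib sum_subtractf)
  also have "\<dots> = (\<Sum>i\<in>UNIV. \<Sum>j\<in>UNIV. \<xi>$i * a$j * A i j)" unfolding swapped by simp
  also have "\<dots> = bform (mat_of A) \<xi> a"
    unfolding bform_def inner_vec_def matrix_vector_mult_def mat_of_def
    by (simp add: sum_distrib_left mult_ac)
  finally show ?thesis .
qed

section \<open>The Hodge dual of a null wedge product\<close>

text \<open>\<open>cyclic \<xi> Z\<close> says \<open>\<xi> \<and> Z = 0\<close>; it is exactly the closedness of \<open>cos (\<xi>\<cdot>x) Z\<close>.\<close>
definition cyclic :: "real^4 \<Rightarrow> (4 \<Rightarrow> 4 \<Rightarrow> real) \<Rightarrow> bool" where
  "cyclic \<xi> Z \<longleftrightarrow> (\<forall>i j k. \<xi>$i * Z j k + \<xi>$j * Z k i + \<xi>$k * Z i j = 0)"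

lemma cyclic_wedge: "cyclic \<xi> (wedge \<xi> a)"
  unfolding cyclic_def wedge_def by (simp add: algebra_simps)

lemma cyclic_linear_combination:
  "cyclic \<xi> X \<Longrightarrow> cyclic \<xi> Y \<Longrightarrow> cyclic \<xi> (\<lambda>i j. C1 * X i j + C2 * Y i j)"
proof -
  assume X: "cyclic \<xi> X" and Y: "cyclic \<xi> Y"
  have "\<xi>$i * (C1 * X j k + C2 * Y j k) + \<xi>$j * (C1 * X k i + C2 * Y k i) + \<xi>$k * (C1 * X i j + C2 * Y i j)
      = C1 * (\<xi>$i * X j k + \<xi>$j * X k i + \<xi>$k * X i j) + C2 * (\<xi>$i * Y j k + \<xi>$j * Y k i + \<xi>$k * Y i j)"
    for i j k by (simp add: algebra_simps)
  then show ?thesis using X Y unfolding cyclic_def by simp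
qed

definition raise2 :: "real^4^4 \<Rightarrow> (4 \<Rightarrow> 4 \<Rightarrow> real) \<Rightarrow> 4 \<Rightarrow> 4 \<Rightarrow> real" where
  "raise2 h X c d = (\<Sum>a\<in>UNIV. \<Sum>b\<in>UNIV. h $ a $ c * h $ b $ d * X a b)"

lemma sum_swap_pairs:
  "(\<Sum>a\<in>A. \<Sum>b\<in>B. \<Sum>c\<in>C. \<Sum>d\<in>D. F a b c d) = (\<Sum>c\<in>C. \<Sum>d\<in>D. \<Sum>a\<in>A. \<Sum>b\<in>B. F a b c d)"
proof -
  have "(\<Sum>a\<in>A. \<Sum>b\<in>B. \<Sum>c\<in>C. \<Sum>d\<in>D. F a b c d) = (\<Sum>a\<in>A. \<Sum>c\<in>C. \<Sum>b\<in>B. \<Sum>d\<in>D. F a b c d)"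
    by (rule sum.cong[OF refl], rule sum.swap)
  also have "\<dots> = (\<Sum>c\<in>C. \<Sum>a\<in>A. \<Sum>d\<in>D. \<Sum>b\<in>B. F a b c d)"
    by (subst sum.swap) (rule sum.cong[OF refl], rule sum.cong[OF refl], rule sum.swap)
  also have "\<dots> = (\<Sum>c\<in>C. \<Sum>d\<in>D. \<Sum>a\<in>A. \<Sum>b\<in>B. F a b c d)"
    by (rule sum.cong[OF refl], rule sum.swap)
  finally show ?thesis .
qed

lemma act_hodge:
  "act (hodge g) X r s = (sqrt \<bar>det g\<bar> / 2) *
     (\<Sum>c\<in>UNIV. \<Sum>d\<in>UNIV. raise2 (matrix_inv g) X c d * levi_civita c d r s)"
proof -
  have "act (hodge g) X r s = (sqrt \<bar>det g\<bar> / 2) * (\<Sum>a\<in>UNIV. \<Sum>b\<in>UNIV. \<Sum>c\<in>UNIV. \<Sum>d\<in>UNIV.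
      matrix_inv g $ a $ c * matrix_inv g $ b $ d * X a b * levi_civita c d r s)"
    unfolding act_def hodge_def by (simp add: sum_distrib_left sum_distrib_right mult_ac)
  also have "(\<Sum>a\<in>UNIV. \<Sum>b\<in>UNIV. \<Sum>c\<in>UNIV. \<Sum>d\<in>UNIV.
      matrix_inv g $ a $ c * matrix_inv g $ b $ d * X a b * levi_civita c d r s)
    = (\<Sum>c\<in>UNIV. \<Sum>d\<in>UNIV. \<Sum>a\<in>UNIV. \<Sum>b\<in>UNIV.
      matrix_inv g $ a $ c * matrix_inv g $ b $ d * X a b * levi_civita c d r s)"
    by (rule sum_swap_pairs)
  finally show ?thesis unfolding raise2_def by (simp add: sum_distrib_right)
qed

lemma sum_product_wedge:
  fixes u v p q :: "'a::finite \<Rightarrow> real"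
  shows "(\<Sum>a\<in>UNIV. \<Sum>b\<in>UNIV. u a * v b * (p a * q b - p b * q a))
     = (\<Sum>a\<in>UNIV. u a * p a) * (\<Sum>b\<in>UNIV. v b * q b) - (\<Sum>a\<in>UNIV. u a * q a) * (\<Sum>b\<in>UNIV. v b * p b)"
proof -
  have "(\<Sum>a\<in>UNIV. \<Sum>b\<in>UNIV. u a * v b * (p a * q b - p b * q a))
     = (\<Sum>a\<in>UNIV. \<Sum>b\<in>UNIV. (u a * p a) * (v b * q b)) - (\<Sum>a\<in>UNIV. \<Sum>b\<in>UNIV. (u a * q a) * (v b * p b))"
    unfolding sum_subtractf[symmetric] by (intro sum.cong refl) (simp add: algebra_simps)
  then show ?thesis by (simp only: sum_product)
qed

lemma raise2_wedge_contraction: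
  fixes h :: "real^4^4" and \<xi> a :: "real^4"
  assumes null: "\<xi> \<bullet> (h *v \<xi>) = 0" and orth: "a \<bullet> (h *v \<xi>) = 0"
  shows "(\<Sum>c\<in>UNIV. raise2 h (wedge \<xi> a) c d * \<xi> $ c) = 0"
    and "(\<Sum>d\<in>UNIV. raise2 h (wedge \<xi> a) c d * \<xi> $ d) = 0"
proof -
  have hv: "(h *v \<xi>) $ x = (\<Sum>c\<in>UNIV. h $ x $ c * \<xi> $ c)" for x
    by (simp add: matrix_vector_mult_def)
  have swap3: "(\<Sum>c\<in>UNIV. \<Sum>x\<in>UNIV. \<Sum>b\<in>UNIV. F x b c) = (\<Sum>x\<in>UNIV. \<Sum>b\<in>UNIV. \<Sum>c\<in>UNIV. F x b c)"
    for F :: "4 \<Rightarrow> 4 \<Rightarrow> 4 \<Rightarrow> real"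
    by (subst sum.swap) (rule sum.cong[OF refl], rule sum.swap)
  have "(\<Sum>c\<in>UNIV. raise2 h (wedge \<xi> a) c d * \<xi> $ c)
     = (\<Sum>x\<in>UNIV. \<Sum>b\<in>UNIV. \<Sum>c\<in>UNIV. h$x$c * h$b$d * wedge \<xi> a x b * \<xi>$c)"
    unfolding raise2_def sum_distrib_right by (rule swap3)
  also have "\<dots> = (\<Sum>x\<in>UNIV. \<Sum>b\<in>UNIV. (h *v \<xi>)$x * h$b$d * (\<xi>$x * a$b - \<xi>$b * a$x))"
    unfolding wedge_def hv by (simp add: sum_distrib_left sum_distrib_right algebra_simps)
  also have "\<dots> = (\<Sum>x\<in>UNIV. (h *v \<xi>)$x * \<xi>$x) * (\<Sum>b\<in>UNIV. h$b$d * a$b)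
        - (\<Sum>x\<in>UNIV. (h *v \<xi>)$x * a$x) * (\<Sum>b\<in>UNIV. h$b$d * \<xi>$b)"
    by (rule sum_product_wedge)
  also have "\<dots> = 0" using null orth by (simp add: inner_vec_def mult.commute)
  finally show "(\<Sum>c\<in>UNIV. raise2 h (wedge \<xi> a) c d * \<xi> $ c) = 0" .
  have "(\<Sum>d\<in>UNIV. raise2 h (wedge \<xi> a) c d * \<xi> $ d)
     = (\<Sum>x\<in>UNIV. \<Sum>b\<in>UNIV. \<Sum>d\<in>UNIV. h$x$c * h$b$d * wedge \<xi> a x b * \<xi>$d)"
    unfolding raise2_def sum_distrib_right by (rule swap3)
  also have "\<dots> = (\<Sum>x\<in>UNIV. \<Sum>b\<in>UNIV. h$x$c * (h *v \<xi>)$b * (\<xi>$x * a$b - \<xi>$b * a$x))"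
    unfolding wedge_def hv by (simp add: sum_distrib_left sum_distrib_right algebra_simps)
  also have "\<dots> = (\<Sum>x\<in>UNIV. h$x$c * \<xi>$x) * (\<Sum>b\<in>UNIV. (h *v \<xi>)$b * a$b)
        - (\<Sum>x\<in>UNIV. h$x$c * a$x) * (\<Sum>b\<in>UNIV. (h *v \<xi>)$b * \<xi>$b)"
    by (rule sum_product_wedge)
  also have "\<dots> = 0" using null orth by (simp add: inner_vec_def mult.commute)
  finally show "(\<Sum>d\<in>UNIV. raise2 h (wedge \<xi> a) c d * \<xi> $ d) = 0" .
qed

lemma levi_civita_contraction_cyclic:
  fixes M :: "4 \<Rightarrow> 4 \<Rightarrow> real" and x :: "4 \<Rightarrow> real"
  assumes left: "\<And>d. (\<Sum>c\<in>UNIV. M c d * x c) = 0" and right: "\<And>c. (\<Sum>d\<in>UNIV. M c d * x d) = 0"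
  shows "x i * (\<Sum>c\<in>UNIV. \<Sum>d\<in>UNIV. M c d * levi_civita c d j k)
       + x j * (\<Sum>c\<in>UNIV. \<Sum>d\<in>UNIV. M c d * levi_civita c d k i)
       + x k * (\<Sum>c\<in>UNIV. \<Sum>d\<in>UNIV. M c d * levi_civita c d i j) = 0"
proof -
  have "x i * (\<Sum>c\<in>UNIV. \<Sum>d\<in>UNIV. M c d * levi_civita c d j k)
       + x j * (\<Sum>c\<in>UNIV. \<Sum>d\<in>UNIV. M c d * levi_civita c d k i)
       + x k * (\<Sum>c\<in>UNIV. \<Sum>d\<in>UNIV. M c d * levi_civita c d i j)
     = (\<Sum>c\<in>UNIV. \<Sum>d\<in>UNIV. M c d * (x i * levi_civita c d j k + x j * levi_civita c d k i
          + x k * levi_civita c d i j))"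
    by (simp add: sum_distrib_left sum.distrib algebra_simps)
  also have "\<dots> = (\<Sum>c\<in>UNIV. \<Sum>d\<in>UNIV. M c d * (x c * levi_civita i d j k + x d * levi_civita c i j k))"
    by (simp only: levi_civita_cyclic_exchange)
  also have "\<dots> = (\<Sum>c\<in>UNIV. \<Sum>d\<in>UNIV. M c d * x c * levi_civita i d j k)
       + (\<Sum>c\<in>UNIV. \<Sum>d\<in>UNIV. M c d * x d * levi_civita c i j k)"
    by (simp add: distrib_left sum.distrib mult.assoc)
  also have "(\<Sum>c\<in>UNIV. \<Sum>d\<in>UNIV. M c d * x c * levi_civita i d j k) = 0"
    by (subst sum.swap) (simp add: sum_distrib_right[symmetric] left)
  also have "(\<Sum>c\<in>UNIV. \<Sum>d\<in>UNIV. M c d * x d * levi_civita c i j k) = 0"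
    by (simp add: sum_distrib_right[symmetric] right)
  finally show ?thesis by simp
qed

lemma hodge_wedge_cyclic:
  assumes null: "bform (matrix_inv g) \<xi> \<xi> = 0" and orth: "bform (matrix_inv g) a \<xi> = 0"
  shows "cyclic \<xi> (act (hodge g) (wedge \<xi> a))"
  unfolding cyclic_def act_hodge
proof (intro allI)
  fix i j k
  let ?M = "raise2 (matrix_inv g) (wedge \<xi> a)" and ?K = "sqrt \<bar>det g\<bar> / 2"
  let ?S = "\<lambda>r s. \<Sum>c\<in>UNIV. \<Sum>d\<in>UNIV. ?M c d * levi_civita c d r s"
  have "\<xi> $ i * ?S j k + \<xi> $ j * ?S k i + \<xi> $ k * ?S i j = 0"
    by (rule levi_civita_contraction_cyclic)
      (use raise2_wedge_contraction[of \<xi> "matrix_inv g" a] null orth in \<open>simp_all add: bform_def\<close>)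
  then have "?K * (\<xi> $ i * ?S j k + \<xi> $ j * ?S k i + \<xi> $ k * ?S i j) = 0" by simp
  then show "\<xi> $ i * (?K * ?S j k) + \<xi> $ j * (?K * ?S k i) + \<xi> $ k * (?K * ?S i j) = 0"
    by (simp only: distrib_left mult.left_commute)
qed

section \<open>Cosine plane waves\<close>

text \<open>\<open>cos (\<xi>\<cdot>x) Z\<close> is closed precisely because \<open>d\<close> of it is \<open>-sin (\<xi>\<cdot>x) \<xi> \<and> Z\<close>.\<close>
lemma closed2_cos_wave:
  assumes "cyclic \<xi> Z"
  shows "closed2 (\<lambda>y i j. cos (\<xi> \<bullet> y) * Z i j)"
proof -
  have deriv: "((\<lambda>y. cos (\<xi> \<bullet> y) * c) has_derivative (\<lambda>v. - sin (\<xi> \<bullet> x) * (\<xi> \<bullet> v) * c)) (at x)"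
    for x c by (auto intro!: derivative_eq_intros simp: algebra_simps)
  have partial: "pderiv4 (\<lambda>y. cos (\<xi> \<bullet> y) * c) i x = - sin (\<xi> \<bullet> x) * \<xi>$i * c" for x c i
    unfolding pderiv4_def using frechet_derivative_at[OF deriv[of c x], symmetric]
    by (simp add: inner_axis)
  show ?thesis unfolding closed2_def
  proof (intro conjI allI)
    fix x i j show "(\<lambda>y. cos (\<xi> \<bullet> y) * Z i j) differentiable at x"
      using deriv differentiable_def by blast
  next
    fix x i j k
    have "\<xi>$i * Z j k + \<xi>$j * Z k i + \<xi>$k * Z i j = 0" using assms unfolding cyclic_def by blast
    then have "- sin (\<xi> \<bullet> x) * (\<xi>$i * Z j k + \<xi>$j * Z k i + \<xi>$k * Z i j) = 0" by simp
    then show "pderiv4 (\<lambda>y. cos (\<xi> \<bullet> y) * Z j k) i x + pderiv4 (\<lambda>y. cos (\<xi> \<bullet> y) * Z k i) j x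
        + pderiv4 (\<lambda>y. cos (\<xi> \<bullet> y) * Z i j) k x = 0"
      unfolding partial by (simp add: algebra_simps)
  qed
qed

lemma cos_plane_wave:
  fixes \<xi> :: "real^4" and X :: "4 \<Rightarrow> 4 \<Rightarrow> real"
  assumes "\<xi> \<noteq> 0" "antisym2 X" "antisym2 (act \<kappa> X)" "X \<noteq> (\<lambda>i j. 0)"
     "cyclic \<xi> X" "cyclic \<xi> (act \<kappa> X)"
  shows "plane_wave \<kappa> (\<lambda>x i j. cos (\<xi> \<bullet> x) * X i j) (\<lambda>x i j. cos (\<xi> \<bullet> x) * act \<kappa> X i j)"
proof -
  have phase: "((\<lambda>x. \<xi> \<bullet> x) has_derivative (\<lambda>v. \<xi> \<bullet> v)) (at x)" for x
    by (rule bounded_linear_imp_has_derivative) (rule bounded_linear_inner_right)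
  have complex_antisym: "antisym2 (\<lambda>i j. complex_of_real (Z i j))" if "antisym2 Z" for Z
    using that unfolding antisym2_def by (metis of_real_minus)
  have amplitude: "(\<lambda>i j. complex_of_real (X i j)) \<noteq> (\<lambda>i j. 0)"
    using assms(4) by (auto simp: fun_eq_iff)
  have real_part: "cos (\<xi> \<bullet> x) * Z i j = Re (exp (\<i> * complex_of_real (\<xi> \<bullet> x)) * complex_of_real (Z i j))"
    for x i j Z by (simp add: cis_conv_exp[symmetric])
  have closed: "closed2 (\<lambda>x i j. cos (\<xi> \<bullet> x) * X i j)" "closed2 (\<lambda>x i j. cos (\<xi> \<bullet> x) * act \<kappa> X i j)"
    by (rule closed2_cos_wave[OF assms(5)] closed2_cos_wave[OF assms(6)])+
  have constitutive: "(\<lambda>i j. cos (\<xi> \<bullet> x) * act \<kappa> X i j) = act \<kappa> (\<lambda>i j. cos (\<xi> \<bullet> x) * X i j)" for x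
    by (simp add: act_scale)
  show ?thesis unfolding plane_wave_def
    by (intro exI[of _ "\<lambda>x. \<xi> \<bullet> x"] exI[of _ \<xi>] exI[of _ "\<lambda>i j. complex_of_real (X i j)"]
        exI[of _ "\<lambda>i j. complex_of_real (act \<kappa> X i j)"] conjI allI)
      (rule assms(1) phase complex_antisym assms(2,3) disjI1 amplitude real_part closed constitutive)+
qed

lemma null_wedge_plane_wave:
  fixes g :: "real^4^4" and C1 C2 :: real
  defines "\<kappa> \<equiv> \<lambda>i j r s. C1 * hodge g i j r s + C2 * Id22 i j r s"
  assumes null: "bform (matrix_inv g) \<xi> \<xi> = 0" and orth: "bform (matrix_inv g) a \<xi> = 0"
    and nonzero: "wedge \<xi> a \<noteq> (\<lambda>i j. 0)"
  shows "plane_wave \<kappa> (\<lambda>x i j. cos (\<xi> \<bullet> x) * wedge \<xi> a i j)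
           (\<lambda>x i j. cos (\<xi> \<bullet> x) * act \<kappa> (wedge \<xi> a) i j)"
proof (rule cos_plane_wave)
  have wedge_antisym: "antisym2 (wedge \<xi> a)" unfolding antisym2_def wedge_def by simp
  then have act_eq: "act \<kappa> (wedge \<xi> a) = (\<lambda>i j. C1 * act (hodge g) (wedge \<xi> a) i j + C2 * wedge \<xi> a i j)"
    unfolding \<kappa>_def by (simp add: fun_eq_iff act_linear_combination act_Id22)
  show "\<xi> \<noteq> 0" using nonzero by (auto simp: wedge_def fun_eq_iff)
  show "antisym2 (wedge \<xi> a)" by (fact wedge_antisym)
  show "antisym2 (act \<kappa> (wedge \<xi> a))"
  proof (rule act_antisym)
    show "\<kappa> b c i j = - \<kappa> b c j i" for b c i j
      unfolding \<kappa>_def using hodge_antisym[of g b c i j] by (simp add: Id22_def)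
  qed
  show "wedge \<xi> a \<noteq> (\<lambda>i j. 0)" by (fact nonzero)
  show "cyclic \<xi> (wedge \<xi> a)" by (rule cyclic_wedge)
  show "cyclic \<xi> (act \<kappa> (wedge \<xi> a))" unfolding act_eq
    by (rule cyclic_linear_combination[OF hodge_wedge_cyclic[OF null orth] cyclic_wedge])
qed

theorem mainTheorem8:
  fixes g :: "real^4^4" and C1 C2 :: real
  assumes "indefinite_metric g" and "C1 \<noteq> 0"
  shows "\<not> decomposable (\<lambda>i j r s. C1 * hodge g i j r s + C2 * Id22 i j r s)"
proof
  let ?\<kappa> = "\<lambda>i j r s. C1 * hodge g i j r s + C2 * Id22 i j r s" and ?h = "matrix_inv g"
  assume "decomposable ?\<kappa>"
  then obtain A B where A: "antisym2 A" "A \<noteq> (\<lambda>i j. 0)" and B: "antisym2 B" "B \<noteq> (\<lambda>i j. 0)"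
    and dec: "\<And>F G. plane_wave ?\<kappa> F G \<Longrightarrow> (\<forall>x. pair2 (F x) A = 0) \<or> (\<forall>x. pair2 (F x) B = 0)"
    unfolding decomposable_def by blast
  note sym = inverse_indefinite_metric(1)[OF assms(1)]
  obtain z0 where z0: "z0 \<noteq> 0" "bform ?h z0 z0 = 0"
    using inverse_indefinite_metric(3)[OF assms(1)] by blast
  obtain v z w where "probe ?h z0 (mat_of A) v z w \<noteq> 0" "probe ?h z0 (mat_of B) v z w \<noteq> 0"
    using probe_simultaneously_nonzero[OF _ sym inverse_indefinite_metric(2)[OF assms(1)] z0
        mat_of_skew[OF A(1)] mat_of_skew[OF B(1)] mat_of_nonzero[OF A(2)] mat_of_nonzero[OF B(2)]]
    by auto
  moreover define \<xi> a where "\<xi> = null_param ?h z0 v" and "a = orth_param ?h \<xi> z w"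
  ultimately have "pair2 (wedge \<xi> a) A \<noteq> 0" "pair2 (wedge \<xi> a) B \<noteq> 0"
    unfolding probe_def pair2_wedge[OF A(1)] pair2_wedge[OF B(1)] by (simp_all add: \<xi>_def a_def)
  moreover have "plane_wave ?\<kappa> (\<lambda>x i j. cos (\<xi> \<bullet> x) * wedge \<xi> a i j)
      (\<lambda>x i j. cos (\<xi> \<bullet> x) * act ?\<kappa> (wedge \<xi> a) i j)"
  proof (rule null_wedge_plane_wave)
    show "bform ?h \<xi> \<xi> = 0" unfolding \<xi>_def using null_param_null[OF sym z0(2)] .
    show "bform ?h a \<xi> = 0" unfolding a_def using orth_param_orthogonal bform_sym[OF sym] by metis
    show "wedge \<xi> a \<noteq> (\<lambda>i j. 0)" using \<open>pair2 (wedge \<xi> a) A \<noteq> 0\<close> by (auto simp: pair2_def)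
  qed
  from dec[OF this] have "pair2 (\<lambda>i j. cos (\<xi> \<bullet> 0) * wedge \<xi> a i j) A = 0
      \<or> pair2 (\<lambda>i j. cos (\<xi> \<bullet> 0) * wedge \<xi> a i j) B = 0" by blast
  then have "pair2 (wedge \<xi> a) A = 0 \<or> pair2 (wedge \<xi> a) B = 0" by simp
  ultimately show False by blast
qed

end
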